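(* Let $\Omega\subseteq\mathbb{R}^n$ be open, $u\colon\Omega\to\mathbb{R}^m$ Borel measurable, and $(P_\xi)_{\xi\in\mathbb{S}^{n-1}}$ a family of curvilinear projections on $\Omega$. Then for every $\xi\in\mathbb{S}^{n-1}$ the set $J_{\hat u_\xi}$ is Borel, and the set $A_{\hat u}\subseteq\Omega\times\mathbb{S}^{n-1}$ is Borel.
   Context: $F\in C^\infty(\mathbb{R}^n\times\mathbb{R}^n;\mathbb{R}^n)$ with $F(x,\alpha v)=\alpha^2F(x,v)$, and $g\in C(\Omega\times\mathbb{R}^n;\mathbb{R}^m)$ are fixed. Transversality: with $S_i=\{\xi\in\mathbb{S}^{n-1}:|\xi\cdot e_i|\ge1/\sqrt n\}$, a family of Lipschitz maps $P_\xi\colon\Omega\to\xi^\perp$ is transversal on $\Omega$ if for every $i$, with $P^i_\xi=\pi_{e_i}\circ P_\xi$ ($\pi_{e_i}$ orthogonal projection onto $e_i^\perp$), $T^i_{xx'}(\xi)=(P^i_\xi(x)-P^i_\xi(x'))/|x-x'|$: (H1) $\xi\mapsto P^i_\xi(x)$ is $C^2$ on $S_i$ with $\sup_{S_i\times\Omega}|D^j_\xi P^i_\xi(x)|<\infty$, $j=1,2$; (H2) there is $C'>0$ with $|T^i_{xx'}(\xi)|\le C'\Rightarrow|\mathrm{J}_\xi T^i_{xx'}(\xi)|\ge C'$; (H3) $|D^j_\xi T^i_{xx'}(\xi)|\le C''$, $j=1,2$. Family of curvilinear projections: there exist $\rho,\tau>0$, open $A\subseteq\mathbb{R}^n\times\mathbb{S}^{n-1}$,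 smooth Lipschitz $\varphi\colon A\to\mathbb{R}^n$ with $A_\xi=\{y+t\xi:y\in\xi^\perp\cap\mathrm{B}_\rho(0),t\in(-\tau,\tau)\}$ such that, with $\varphi_\xi=\varphi(\cdot,\xi)$: $\Omega\subseteq\varphi_\xi(A_\xi)$; $\varphi_\xi^{-1}|_\Omega$ is a bi-Lipschitz diffeomorphism onto its image; $P_\xi(\varphi_\xi(y+t\xi))=y$ whenever $y+t\xi\in\varphi_\xi^{-1}(\Omega)$; each $P_\xi$ smooth Lipschitz with $\ddot\varphi_\xi=F(\varphi_\xi,\dot\varphi_\xi)$ ($t$-derivatives); transversal; and for each $x$, $\xi\mapsto\xi_\varphi(x)/|\xi_\varphi(x)|$ is a diffeomorphism of $\mathbb{S}^{n-1}$, where $t^\xi_x=\varphi_\xi^{-1}(x)\cdot\xi$ and $\xi_\varphi(x)=\dot\varphi_\xi(P_\xi(x)+t^\xi_x\xi)$. Slices: $\hat u^\xi_y(t)=u(\varphi_\xi(y+t\xi))\cdot g(\varphi_\xi(y+t\xi),\dot\varphi_\xi(y+t\xi))$ for $t$ with $\varphi_\xi(y+t\xi)\in\Omega$. For a function $f$ of one real variable, $J_f$ is the set of $t$ where the right and left approximate limits of $f$ exist in $\mathbb{R}$ and differ. Directional jump set: $J_{\hat u_\xi}:=\{x\in\Omega:t^\xi_x\in J_{\hat u^\xi_{P_\xi(x)}}\}$, and $A_{\hat u}:=\{(x,\xi)\in\Omega\times\mathbb{S}^{n-1}:x\in J_{\hat u_\xi}\}$. *)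

theory Defs
  imports "HOL-Analysis.Analysis"
begin

fun dderivs :: "('a::real_normed_vector \<Rightarrow> 'b::real_normed_vector) \<Rightarrow> 'a set \<Rightarrow> 'a list \<Rightarrow> 'a \<Rightarrow> 'b" where
  "dderivs f S [] = f"
| "dderivs f S (v # vs) = (\<lambda>x. frechet_derivative (dderivs f S vs) (at x within S) v)"

text \<open>C^k on a set (used on open sets and on closed-interior cones, where
  derivatives within the set are unique).\<close>
definition Ck_on :: "nat \<Rightarrow> 'a::real_normed_vector set \<Rightarrow> ('a \<Rightarrow> 'b::real_normed_vector) \<Rightarrow> bool" where
  "Ck_on k S f \<longleftrightarrow>
     (\<forall>vs. length vs < k \<longrightarrow> dderivs f S vs differentiable_on S) \<and>
     (\<forall>vs. length vs \<le> k \<longrightarrow> continuous_on S (dderivs f S vs))"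

definition Cinf_on :: "'a::real_normed_vector set \<Rightarrow> ('a \<Rightarrow> 'b::real_normed_vector) \<Rightarrow> bool" where
  "Cinf_on S f \<longleftrightarrow> (\<forall>k. Ck_on k S f)"

definition smooth_mfd :: "'a::real_normed_vector set \<Rightarrow> ('a \<Rightarrow> 'b::real_normed_vector) \<Rightarrow> bool" where
  "smooth_mfd S f \<longleftrightarrow>
     (\<forall>p\<in>S. \<exists>U h. open U \<and> p \<in> U \<and> Cinf_on U h \<and> (\<forall>q\<in>U \<inter> S. h q = f q))"

definition sphere_diffeo :: "(real^'n \<Rightarrow> real^'n) \<Rightarrow> bool" where
  "sphere_diffeo f \<longleftrightarrow> bij_betw f (sphere 0 1) (sphere 0 1) \<and>
     smooth_mfd (sphere 0 1) f \<and> smooth_mfd (sphere 0 1) (inv_into (sphere 0 1) f)"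

definition perp :: "'a::real_inner \<Rightarrow> 'a set" where
  "perp \<xi> = {y. y \<bullet> \<xi> = 0}"

definition proj_perp :: "'a::real_inner \<Rightarrow> 'a \<Rightarrow> 'a" where
  "proj_perp e v = v - (v \<bullet> e) *\<^sub>R e"

definition Acyl :: "real \<Rightarrow> real \<Rightarrow> 'a::real_inner \<Rightarrow> 'a set" where
  "Acyl \<rho> \<tau> \<xi> = {y + t *\<^sub>R \<xi> | y t. y \<in> perp \<xi> \<and> norm y < \<rho> \<and> \<bar>t\<bar> < \<tau>}"

definition Scap :: "'n::finite \<Rightarrow> (real^'n) set" where
  "Scap i = {\<xi> \<in> sphere 0 1. \<bar>\<xi> $ i\<bar> \<ge> 1 / sqrt (real CARD('n))}"

definition Scone :: "'n::finite \<Rightarrow> (real^'n) set" where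
  "Scone i = {\<eta>. \<eta> \<noteq> 0 \<and> (1 / norm \<eta>) *\<^sub>R \<eta> \<in> Scap i}"

definition hom0 :: "(real^'n \<Rightarrow> 'b) \<Rightarrow> real^'n \<Rightarrow> 'b" where
  "hom0 f \<eta> = f ((1 / norm \<eta>) *\<^sub>R \<eta>)"

text \<open>Absolute value of the Jacobian of f : S_i -> e_i^perp at xi
  (intrinsic, computed through the 0-homogeneous extension).\<close>
definition absJac :: "'n::finite \<Rightarrow> (real^'n \<Rightarrow> real^'n) \<Rightarrow> real^'n \<Rightarrow> real" where
  "absJac i f \<xi> = \<bar>det (matrix (\<lambda>v.
      frechet_derivative (hom0 f) (at \<xi> within Scone i) (v - (v \<bullet> \<xi>) *\<^sub>R \<xi>)
      + (v \<bullet> \<xi>) *\<^sub>R axis i 1))\<bar>"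

definition transversal :: "(real^'n::finite) set \<Rightarrow> (real^'n \<Rightarrow> real^'n \<Rightarrow> real^'n) \<Rightarrow> bool" where
  "transversal \<Omega> P \<longleftrightarrow> (\<forall>i::'n.
     let Pi = (\<lambda>\<xi> x. proj_perp (axis i 1) (P \<xi> x));
         T = (\<lambda>x x' \<xi>. (1 / norm (x - x')) *\<^sub>R (Pi \<xi> x - Pi \<xi> x'))
     in
     \<comment> \<open>(H1)\<close>
     (\<forall>x\<in>\<Omega>. Ck_on 2 (Scone i) (hom0 (\<lambda>\<xi>. Pi \<xi> x))) \<and>
     (\<exists>C. \<forall>x\<in>\<Omega>. \<forall>\<xi>\<in>Scap i. \<forall>vs. 1 \<le> length vs \<and> length vs \<le> 2 \<longrightarrow>
         norm (dderivs (hom0 (\<lambda>\<xi>. Pi \<xi> x)) (Scone i) vs \<xi>) \<le> C * prod_list (map norm vs)) \<and>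
     \<comment> \<open>(H2)\<close>
     (\<exists>C'>0. \<forall>x\<in>\<Omega>. \<forall>x'\<in>\<Omega>. x \<noteq> x' \<longrightarrow> (\<forall>\<xi>\<in>Scap i.
         norm (T x x' \<xi>) \<le> C' \<longrightarrow> absJac i (T x x') \<xi> \<ge> C')) \<and>
     \<comment> \<open>(H3)\<close>
     (\<exists>C''. \<forall>x\<in>\<Omega>. \<forall>x'\<in>\<Omega>. x \<noteq> x' \<longrightarrow> (\<forall>\<xi>\<in>Scap i. \<forall>vs. 1 \<le> length vs \<and> length vs \<le> 2 \<longrightarrow>
         norm (dderivs (hom0 (T x x')) (Scone i) vs \<xi>) \<le> C'' * prod_list (map norm vs))))"

definition phidot :: "((real^'n) \<times> (real^'n) \<Rightarrow> real^'n) \<Rightarrow> real^'n \<Rightarrow> real^'n \<Rightarrow> real^'n" where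
  "phidot phi \<xi> z = vector_derivative (\<lambda>t. phi (z + t *\<^sub>R \<xi>, \<xi>)) (at 0)"

definition phiddot :: "((real^'n) \<times> (real^'n) \<Rightarrow> real^'n) \<Rightarrow> real^'n \<Rightarrow> real^'n \<Rightarrow> real^'n" where
  "phiddot phi \<xi> z = vector_derivative (\<lambda>t. phidot phi \<xi> (z + t *\<^sub>R \<xi>)) (at 0)"

definition phiinv :: "real \<Rightarrow> real \<Rightarrow> ((real^'n) \<times> (real^'n) \<Rightarrow> real^'n) \<Rightarrow> real^'n \<Rightarrow> real^'n \<Rightarrow> real^'n" where
  "phiinv \<rho> \<tau> phi \<xi> = inv_into (Acyl \<rho> \<tau> \<xi>) (\<lambda>z. phi (z, \<xi>))"

definition tx :: "real \<Rightarrow> real \<Rightarrow> ((real^'n) \<times> (real^'n) \<Rightarrow> real^'n) \<Rightarrow> real^'n \<Rightarrow> real^'n \<Rightarrow> real" where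
  "tx \<rho> \<tau> phi \<xi> x = phiinv \<rho> \<tau> phi \<xi> x \<bullet> \<xi>"

definition xi_phi :: "real \<Rightarrow> real \<Rightarrow> ((real^'n) \<times> (real^'n) \<Rightarrow> real^'n) \<Rightarrow> (real^'n \<Rightarrow> real^'n \<Rightarrow> real^'n)
     \<Rightarrow> real^'n \<Rightarrow> real^'n \<Rightarrow> real^'n" where
  "xi_phi \<rho> \<tau> phi P x \<xi> = phidot phi \<xi> (P \<xi> x + tx \<rho> \<tau> phi \<xi> x *\<^sub>R \<xi>)"

definition curvilinear_projections ::
  "(real^'n \<Rightarrow> real^'n \<Rightarrow> real^'n) \<Rightarrow> (real^'n::finite) set \<Rightarrow> (real^'n \<Rightarrow> real^'n \<Rightarrow> real^'n)
   \<Rightarrow> real \<Rightarrow> real \<Rightarrow> ((real^'n) \<times> (real^'n)) set \<Rightarrow> ((real^'n) \<times> (real^'n) \<Rightarrow> real^'n) \<Rightarrow> bool" where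
  "curvilinear_projections F \<Omega> P \<rho> \<tau> A phi \<longleftrightarrow>
     \<rho> > 0 \<and> \<tau> > 0 \<and>
     A \<subseteq> UNIV \<times> sphere 0 1 \<and> openin (top_of_set (UNIV \<times> sphere 0 1)) A \<and>
     (\<forall>\<xi>\<in>sphere 0 1. {z. (z, \<xi>) \<in> A} = Acyl \<rho> \<tau> \<xi>) \<and>
     smooth_mfd A phi \<and> (\<exists>L. L-lipschitz_on A phi) \<and>
     (\<forall>\<xi>\<in>sphere 0 1.
        \<Omega> \<subseteq> (\<lambda>z. phi (z, \<xi>)) ` Acyl \<rho> \<tau> \<xi> \<and>
        inj_on (\<lambda>z. phi (z, \<xi>)) {z \<in> Acyl \<rho> \<tau> \<xi>. phi (z, \<xi>) \<in> \<Omega>} \<and>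
        (\<exists>L>0. \<forall>x\<in>\<Omega>. \<forall>x'\<in>\<Omega>.
            dist x x' \<le> L * dist (phiinv \<rho> \<tau> phi \<xi> x) (phiinv \<rho> \<tau> phi \<xi> x') \<and>
            dist (phiinv \<rho> \<tau> phi \<xi> x) (phiinv \<rho> \<tau> phi \<xi> x') \<le> L * dist x x') \<and>
        Cinf_on \<Omega> (phiinv \<rho> \<tau> phi \<xi>) \<and>
        smooth_mfd (phiinv \<rho> \<tau> phi \<xi> ` \<Omega>) (\<lambda>z. phi (z, \<xi>)) \<and>
        (\<forall>y t. y \<in> perp \<xi> \<and> norm y < \<rho> \<and> \<bar>t\<bar> < \<tau> \<and> phi (y + t *\<^sub>R \<xi>, \<xi>) \<in> \<Omega> \<longrightarrow>
            P \<xi> (phi (y + t *\<^sub>R \<xi>, \<xi>)) = y) \<and>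
        (\<forall>x\<in>\<Omega>. P \<xi> x \<in> perp \<xi>) \<and> Cinf_on \<Omega> (P \<xi>) \<and> (\<exists>L. L-lipschitz_on \<Omega> (P \<xi>)) \<and>
        (\<forall>z\<in>Acyl \<rho> \<tau> \<xi>. phiddot phi \<xi> z = F (phi (z, \<xi>)) (phidot phi \<xi> z))) \<and>
     transversal \<Omega> P \<and>
     (\<forall>x\<in>\<Omega>. sphere_diffeo (\<lambda>\<xi>. (1 / norm (xi_phi \<rho> \<tau> phi P x \<xi>)) *\<^sub>R xi_phi \<rho> \<tau> phi P x \<xi>))"

definition slice :: "(real^'n \<Rightarrow> real^'m) \<Rightarrow> (real^'n \<Rightarrow> real^'n \<Rightarrow> real^'m) \<Rightarrow> ((real^'n) \<times> (real^'n) \<Rightarrow> real^'n)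
     \<Rightarrow> real^'n \<Rightarrow> real^'n \<Rightarrow> real \<Rightarrow> real" where
  "slice u g phi \<xi> y t =
     u (phi (y + t *\<^sub>R \<xi>, \<xi>)) \<bullet> g (phi (y + t *\<^sub>R \<xi>, \<xi>)) (phidot phi \<xi> (y + t *\<^sub>R \<xi>))"

definition aplim_right :: "(real \<Rightarrow> real) \<Rightarrow> real \<Rightarrow> real \<Rightarrow> bool" where
  "aplim_right f t a \<longleftrightarrow> (\<forall>\<epsilon>>0.
     ((\<lambda>r. measure lebesgue {s. t < s \<and> s < t + r \<and> \<bar>f s - a\<bar> > \<epsilon>} / r) \<longlongrightarrow> 0) (at_right 0))"

definition aplim_left :: "(real \<Rightarrow> real) \<Rightarrow> real \<Rightarrow> real \<Rightarrow> bool" where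
  "aplim_left f t a \<longleftrightarrow> (\<forall>\<epsilon>>0.
     ((\<lambda>r. measure lebesgue {s. t - r < s \<and> s < t \<and> \<bar>f s - a\<bar> > \<epsilon>} / r) \<longlongrightarrow> 0) (at_right 0))"

definition jumpset :: "(real \<Rightarrow> real) \<Rightarrow> real set" where
  "jumpset f = {t. \<exists>a b. aplim_right f t a \<and> aplim_left f t b \<and> a \<noteq> b}"

definition dirjump :: "(real^'n) set \<Rightarrow> (real^'n \<Rightarrow> real^'m) \<Rightarrow> (real^'n \<Rightarrow> real^'n \<Rightarrow> real^'m)
     \<Rightarrow> (real^'n \<Rightarrow> real^'n \<Rightarrow> real^'n) \<Rightarrow> real \<Rightarrow> real \<Rightarrow> ((real^'n) \<times> (real^'n) \<Rightarrow> real^'n)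
     \<Rightarrow> real^'n \<Rightarrow> (real^'n) set" where
  "dirjump \<Omega> u g P \<rho> \<tau> phi \<xi> =
     {x \<in> \<Omega>. tx \<rho> \<tau> phi \<xi> x \<in> jumpset (slice u g phi \<xi> (P \<xi> x))}"

definition Ahat :: "(real^'n) set \<Rightarrow> (real^'n \<Rightarrow> real^'m) \<Rightarrow> (real^'n \<Rightarrow> real^'n \<Rightarrow> real^'m)
     \<Rightarrow> (real^'n \<Rightarrow> real^'n \<Rightarrow> real^'n) \<Rightarrow> real \<Rightarrow> real \<Rightarrow> ((real^'n) \<times> (real^'n) \<Rightarrow> real^'n)
     \<Rightarrow> ((real^'n) \<times> (real^'n)) set" where
  "Ahat \<Omega> u g P \<rho> \<tau> phi =
     {(x, \<xi>). x \<in> \<Omega> \<and> \<xi> \<in> sphere 0 1 \<and> x \<in> dirjump \<Omega> u g P \<rho> \<tau> phi \<xi>}"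

end

theory Submission
  imports Defs
begin

(* A one-sided approximate limit is a limit along the ideal of Borel
   sets of zero one-sided density at t, and along any such ideal, both the existence of a limit
   and the comparison of limits along two ideals reduce to countably many statements
   "{s. q < f s} is small" or "{s. f s < q} is small" with q rational. When f depends measurably
   on a parameter x, each such statement is measurable in x: the measure of a section of a
   measurable set is measurable, and by monotonicity the density may be computed along
   r = 1/k. Hence {x. tau x in jumpset (f x)} is measurable.

   To apply this to A_u, the slices are written as one jointly Borel function of (x, xi, s).
   The inverse chart (x, xi) -> phi_xi^-1(x) is Borel, since it inverts the continuous injection
   (z, xi) -> (phi (z, xi), xi) on the sigma-compact set A; the velocity phidot is a pointwise
   limit of difference quotients; and phi, u and g are extended by zero off their domains. The
   resulting function agrees with the slice near t_x^xi, and jump sets are local. Finally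
   J_u_xi is the section of A_u at xi. *)

section \<open>Limits along an ideal of small sets\<close>

definition ideal_limit :: "(real set \<Rightarrow> bool) \<Rightarrow> (real \<Rightarrow> real) \<Rightarrow> real \<Rightarrow> bool" where
  "ideal_limit small f a \<longleftrightarrow> (\<forall>e>0. small {s. e < \<bar>f s - a\<bar>})"

locale borel_ideal =
  fixes small :: "real set \<Rightarrow> bool"
  assumes small_subset: "S \<in> sets borel \<Longrightarrow> T \<in> sets borel \<Longrightarrow> S \<subseteq> T \<Longrightarrow> small T \<Longrightarrow> small S"
    and small_Un: "S \<in> sets borel \<Longrightarrow> T \<in> sets borel \<Longrightarrow> small S \<Longrightarrow> small T \<Longrightarrow> small (S \<union> T)"
    and small_Un_neq_UNIV: "S \<in> sets borel \<Longrightarrow> T \<in> sets borel \<Longrightarrow> small S \<Longrightarrow> small T \<Longrightarrow> S \<union> T \<noteq> UNIV"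
begin

context
  fixes f :: "real \<Rightarrow> real"
  assumes f_borel[measurable]: "f \<in> borel_measurable borel"
begin

lemma small_above_mono: "small {s. q < f s} \<Longrightarrow> q \<le> q' \<Longrightarrow> small {s. q' < f s}"
  by (erule small_subset[rotated 3]) auto

lemma small_below_mono: "small {s. f s < q} \<Longrightarrow> q' \<le> q \<Longrightarrow> small {s. f s < q'}"
  by (erule small_subset[rotated 3]) auto

lemma not_small_above_below: "small {s. q < f s} \<Longrightarrow> small {s. f s < q'} \<Longrightarrow> q < q' \<Longrightarrow> False"
  using small_Un_neq_UNIV[of "{s. q < f s}" "{s. f s < q'}"] by force

lemma small_deviation:
  assumes "small {s. a + e < f s}" "small {s. f s < a - e}"
  shows "small {s. e < \<bar>f s - a\<bar>}"
  by (rule small_subset[OF _ _ _ small_Un[OF _ _ assms]]) auto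

lemma ideal_limit_small_above: "ideal_limit small f a \<Longrightarrow> a < q \<Longrightarrow> small {s. q < f s}"
  unfolding ideal_limit_def by (erule allE[of _ "q - a"], erule small_subset[rotated 3, OF mp]) auto

lemma ideal_limit_small_below: "ideal_limit small f a \<Longrightarrow> q < a \<Longrightarrow> small {s. f s < q}"
  unfolding ideal_limit_def by (erule allE[of _ "a - q"], erule small_subset[rotated 3, OF mp]) auto

lemma ideal_limit_le: "ideal_limit small f a \<Longrightarrow> small {s. q < f s} \<Longrightarrow> a \<le> q"
  using not_small_above_below[of q "(q + a) / 2"] ideal_limit_small_below[of a "(q + a) / 2"]
  by (cases "a \<le> q") auto

lemma ideal_limit_ge: "ideal_limit small f a \<Longrightarrow> small {s. f s < q} \<Longrightarrow> q \<le> a"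
  using not_small_above_below[of "(q + a) / 2" q] ideal_limit_small_above[of a "(q + a) / 2"]
  by (cases "q \<le> a") auto

lemma ideal_limit_Inf:
  assumes q0: "small {s. q0 < f s}" and l0: "small {s. f s < l0}"
    and between: "\<And>q1 q2::rat. q1 < q2 \<Longrightarrow> small {s. f s < of_rat q1} \<or> small {s. of_rat q2 < f s}"
  shows "ideal_limit small f (Inf {q. small {s. q < f s}})"
proof -
  define X where "X = {q. small {s. q < f s}}"
  have X_ne: "X \<noteq> {}" using q0 by (auto simp: X_def)
  have "l0 \<le> q" if "q \<in> X" for q
    using not_small_above_below[of q l0] l0 that by (force simp: X_def)
  then have bdd: "bdd_below X" by (rule bdd_belowI)
  have "ideal_limit small f (Inf X)"
    unfolding ideal_limit_def
  proof (intro allI impI small_deviation)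
    fix e :: real assume e: "e > 0"
    then obtain q where "q \<in> X" "q < Inf X + e"
      using cInf_less_iff[OF X_ne bdd, of "Inf X + e"] by auto
    then show "small {s. Inf X + e < f s}" using small_above_mono[of q "Inf X + e"] by (auto simp: X_def)
    obtain q1 :: rat where q1: "Inf X - e < of_rat q1" "of_rat q1 < Inf X"
      using e of_rat_dense[of "Inf X - e" "Inf X"] by auto
    obtain q2 :: rat where q: "of_rat q1 < (of_rat q2 :: real)" "of_rat q2 < Inf X"
      using q1 of_rat_dense[of "of_rat q1" "Inf X"] by auto
    have "\<not> small {s. of_rat q2 < f s}"
      using cInf_lower[OF _ bdd, of "of_rat q2"] q(2) by (auto simp: X_def)
    then have "small {s. f s < of_rat q1}" using between q(1) of_rat_less by blast
    then show "small {s. f s < Inf X - e}" using small_below_mono q1(1) by simp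
  qed
  then show ?thesis by (simp add: X_def)
qed

lemma ex_ideal_limit_iff:
  "(\<exists>a. ideal_limit small f a) \<longleftrightarrow>
     (\<exists>q::rat. small {s. of_rat q < f s}) \<and> (\<exists>q::rat. small {s. f s < of_rat q}) \<and>
     (\<forall>q1 q2::rat. q1 < q2 \<longrightarrow> small {s. f s < of_rat q1} \<or> small {s. of_rat q2 < f s})"
proof safe
  fix a assume a: "ideal_limit small f a"
  obtain q :: rat where "a < of_rat q" using of_rat_dense[of a "a + 1"] by auto
  then show "\<exists>q::rat. small {s. of_rat q < f s}" using a ideal_limit_small_above by blast
  obtain q :: rat where "of_rat q < a" using of_rat_dense[of "a - 1" a] by auto
  then show "\<exists>q::rat. small {s. f s < of_rat q}" using a ideal_limit_small_below by blast
  fix q1 q2 :: rat assume "q1 < q2" "\<not> small {s. of_rat q2 < f s}"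
  then show "small {s. f s < of_rat q1}"
    using a ideal_limit_small_above ideal_limit_small_below of_rat_less[of q1 q2, where 'a=real]
    by (cases "of_rat q1 < a") fastforce+
next
  fix q0 l0 :: rat
  assume "small {s. of_rat q0 < f s}" "small {s. f s < of_rat l0}"
    and "\<forall>q1 q2::rat. q1 < q2 \<longrightarrow> small {s. f s < of_rat q1} \<or> small {s. of_rat q2 < f s}"
  then show "\<exists>a. ideal_limit small f a"
    using ideal_limit_Inf by blast
qed

end

end

lemma ideal_limits_less_iff:
  assumes I: "borel_ideal I" and J: "borel_ideal J" and f[measurable]: "f \<in> borel_measurable borel"
    and a: "ideal_limit I f a" and b: "ideal_limit J f b"
  shows "a < b \<longleftrightarrow> (\<exists>q1 q2::rat. q1 < q2 \<and> I {s. of_rat q1 < f s} \<and> J {s. f s < of_rat q2})"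
proof
  assume "a < b"
  then obtain q1 :: rat where q1: "a < of_rat q1" "of_rat q1 < b"
    using of_rat_dense by blast
  then obtain q2 :: rat where q2: "of_rat q1 < (of_rat q2 :: real)" "of_rat q2 < b"
    using of_rat_dense by blast
  show "\<exists>q1 q2::rat. q1 < q2 \<and> I {s. of_rat q1 < f s} \<and> J {s. f s < of_rat q2}"
    using q1 q2 borel_ideal.ideal_limit_small_above[OF I f a] borel_ideal.ideal_limit_small_below[OF J f b]
    by (auto simp: of_rat_less)
next
  assume "\<exists>q1 q2::rat. q1 < q2 \<and> I {s. of_rat q1 < f s} \<and> J {s. f s < of_rat q2}"
  then obtain q1 q2 :: rat where "q1 < q2" "a \<le> of_rat q1" "of_rat q2 \<le> b"
    using borel_ideal.ideal_limit_le[OF I f a] borel_ideal.ideal_limit_ge[OF J f b] by blast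
  then show "a < b" by (simp add: of_rat_less[symmetric, where 'a=real])
qed

section \<open>Approximate one-sided limits\<close>

definition window_family :: "(real \<Rightarrow> real set) \<Rightarrow> bool" where
  "window_family I \<longleftrightarrow> (\<forall>r>0. I r \<in> sets borel \<and> measure lborel (I r) = r) \<and>
     (\<forall>r r'. 0 < r \<longrightarrow> r \<le> r' \<longrightarrow> I r \<subseteq> I r')"

definition null_density :: "(real \<Rightarrow> real set) \<Rightarrow> real set \<Rightarrow> bool" where
  "null_density I S \<longleftrightarrow> ((\<lambda>r. measure lborel (I r \<inter> S) / r) \<longlongrightarrow> 0) (at_right 0)"

lemma window_family_right: "window_family (\<lambda>r. {t<..<t + r})"
  by (auto simp: window_family_def)

lemma window_family_left: "window_family (\<lambda>r. {t - r<..<t})"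
  by (auto simp: window_family_def)

lemma measure_window_Int_mono:
  assumes I: "window_family I" and r: "0 < r" "r \<le> r'" and S: "S \<in> sets borel" and T: "T \<in> sets borel"
    and "S \<subseteq> T"
  shows "measure lborel (I r \<inter> S) \<le> measure lborel (I r' \<inter> T)"
proof (rule measure_mono_fmeasurable)
  have I_r: "I r \<in> sets borel" and I_r': "I r' \<in> sets borel" "measure lborel (I r') = r'"
    using I r unfolding window_family_def by auto
  then have "emeasure lborel (I r') \<noteq> \<infinity>"
    using measure_zero_top[of lborel "I r'"] r by auto
  then have "I r' \<in> fmeasurable lborel"
    using I_r' by (simp add: fmeasurableI less_top)
  then show "I r' \<inter> T \<in> fmeasurable lborel" by (rule fmeasurableI2) (use T I_r' in auto)
  have "I r \<subseteq> I r'" using I r unfolding window_family_def by blast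
  then show "I r \<inter> S \<subseteq> I r' \<inter> T" using \<open>S \<subseteq> T\<close> by blast
  show "I r \<inter> S \<in> sets lborel" using I_r S by simp
qed

lemma borel_ideal_null_density:
  assumes I: "window_family I"
  shows "borel_ideal (null_density I)"
proof
  have ev_pos: "\<forall>\<^sub>F r in at_right 0. 0 < (r::real)" by (rule eventually_at_right_less)
  fix S T :: "real set" assume S: "S \<in> sets borel" and T: "T \<in> sets borel"
  have Un_le: "measure lborel (I r \<inter> (S \<union> T)) / r \<le> measure lborel (I r \<inter> S) / r + measure lborel (I r \<inter> T) / r"
    if "0 < r" for r
  proof -
    have "measure lborel (I r \<inter> (S \<union> T)) \<le> measure lborel (I r \<inter> S) + measure lborel (I r \<inter> T)"
      unfolding Int_Un_distrib by (rule measure_Un_le) (use I S T that in \<open>auto simp: window_family_def\<close>)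
    then show ?thesis using that by (simp add: add_divide_distrib[symmetric] divide_right_mono)
  qed
  have limits: "((\<lambda>r. measure lborel (I r \<inter> S) / r + measure lborel (I r \<inter> T) / r) \<longlongrightarrow> 0) (at_right 0)"
    if "null_density I S" "null_density I T"
    by (rule tendsto_add_zero[OF that[unfolded null_density_def]])
  {
    assume "S \<subseteq> T" and dT: "null_density I T"
    have "measure lborel (I r \<inter> S) / r \<le> measure lborel (I r \<inter> T) / r" if "0 < r" for r
      using measure_window_Int_mono[OF I that order_refl S T \<open>S \<subseteq> T\<close>] that by (simp add: divide_right_mono)
    then show "null_density I S"
      unfolding null_density_def
      by (intro real_tendsto_sandwich[OF _ _ tendsto_const dT[unfolded null_density_def]])
        (auto intro: eventually_mono[OF ev_pos])
  next
    assume dS: "null_density I S" and dT: "null_density I T"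
    then show "null_density I (S \<union> T)"
      unfolding null_density_def
      by (intro real_tendsto_sandwich[OF _ _ tendsto_const limits[OF dS dT]])
        (auto intro: eventually_mono[OF ev_pos] Un_le)
  next
    assume dS: "null_density I S" and dT: "null_density I T"
    show "S \<union> T \<noteq> UNIV"
    proof
      assume cover: "S \<union> T = UNIV"
      have "1 \<le> measure lborel (I r \<inter> S) / r + measure lborel (I r \<inter> T) / r" if "0 < r" for r
        using Un_le[OF that] that I by (simp add: cover window_family_def)
      then have "(1::real) \<le> 0"
        by (intro tendsto_lowerbound[OF limits[OF dS dT]] eventually_mono[OF ev_pos]) auto
      then show False by simp
    qed
  }
qed

lemma aplim_right_iff_ideal_limit:
  assumes [measurable]: "f \<in> borel_measurable borel"
  shows "aplim_right f t a \<longleftrightarrow> ideal_limit (null_density (\<lambda>r. {t<..<t + r})) f a"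
proof -
  have "{s. t < s \<and> s < t + r \<and> e < \<bar>f s - a\<bar>} = {t<..<t + r} \<inter> {s. e < \<bar>f s - a\<bar>}" for r e
    by auto
  moreover have "{t<..<t + r} \<inter> {s. e < \<bar>f s - a\<bar>} \<in> sets borel" for r e by measurable
  ultimately show ?thesis
    unfolding aplim_right_def ideal_limit_def null_density_def by (simp add: measure_completion)
qed

lemma aplim_left_iff_ideal_limit:
  assumes [measurable]: "f \<in> borel_measurable borel"
  shows "aplim_left f t a \<longleftrightarrow> ideal_limit (null_density (\<lambda>r. {t - r<..<t})) f a"
proof -
  have "{s. t - r < s \<and> s < t \<and> e < \<bar>f s - a\<bar>} = {t - r<..<t} \<inter> {s. e < \<bar>f s - a\<bar>}" for r e
    by auto
  moreover have "{t - r<..<t} \<inter> {s. e < \<bar>f s - a\<bar>} \<in> sets borel" for r e by measurable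
  ultimately show ?thesis
    unfolding aplim_left_def ideal_limit_def null_density_def by (simp add: measure_completion)
qed

lemma jumpset_iff:
  fixes f :: "real \<Rightarrow> real" and t :: real
  assumes f: "f \<in> borel_measurable borel"
  defines "R \<equiv> null_density (\<lambda>r. {t<..<t + r})" and "L \<equiv> null_density (\<lambda>r. {t - r<..<t})"
  shows "t \<in> jumpset f \<longleftrightarrow>
    (\<exists>q::rat. R {s. of_rat q < f s}) \<and> (\<exists>q::rat. R {s. f s < of_rat q}) \<and>
    (\<forall>q1 q2::rat. q1 < q2 \<longrightarrow> R {s. f s < of_rat q1} \<or> R {s. of_rat q2 < f s}) \<and>
    (\<exists>q::rat. L {s. of_rat q < f s}) \<and> (\<exists>q::rat. L {s. f s < of_rat q}) \<and>
    (\<forall>q1 q2::rat. q1 < q2 \<longrightarrow> L {s. f s < of_rat q1} \<or> L {s. of_rat q2 < f s}) \<and>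
    (\<exists>q1 q2::rat. q1 < q2 \<and> (R {s. of_rat q1 < f s} \<and> L {s. f s < of_rat q2} \<or>
                             L {s. of_rat q1 < f s} \<and> R {s. f s < of_rat q2}))"
proof -
  have R: "borel_ideal R" and L: "borel_ideal L"
    unfolding R_def L_def by (intro borel_ideal_null_density window_family_right window_family_left)+
  have "a \<noteq> b \<longleftrightarrow> (\<exists>q1 q2::rat. q1 < q2 \<and> (R {s. of_rat q1 < f s} \<and> L {s. f s < of_rat q2} \<or>
                             L {s. of_rat q1 < f s} \<and> R {s. f s < of_rat q2}))"
    if "ideal_limit R f a" "ideal_limit L f b" for a b
    using ideal_limits_less_iff[OF R L f that] ideal_limits_less_iff[OF L R f that(2,1)]
    by (auto simp: neq_iff)
  moreover have "t \<in> jumpset f \<longleftrightarrow> (\<exists>a b. ideal_limit R f a \<and> ideal_limit L f b \<and> a \<noteq> b)"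
    unfolding jumpset_def R_def L_def aplim_right_iff_ideal_limit[OF f] aplim_left_iff_ideal_limit[OF f]
    by simp
  ultimately have "t \<in> jumpset f \<longleftrightarrow> (\<exists>a. ideal_limit R f a) \<and> (\<exists>b. ideal_limit L f b) \<and>
    (\<exists>q1 q2::rat. q1 < q2 \<and> (R {s. of_rat q1 < f s} \<and> L {s. f s < of_rat q2} \<or>
                             L {s. of_rat q1 < f s} \<and> R {s. f s < of_rat q2}))"
    by blast
  then show ?thesis
    unfolding borel_ideal.ex_ideal_limit_iff[OF R f] borel_ideal.ex_ideal_limit_iff[OF L f]
    by (simp only: conj_assoc)
qed

lemma jumpset_cong_local:
  fixes f h :: "real \<Rightarrow> real"
  assumes "0 < \<delta>" and eq: "\<And>s. \<bar>s - t\<bar> < \<delta> \<Longrightarrow> f s = h s"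
  shows "t \<in> jumpset f \<longleftrightarrow> t \<in> jumpset h"
proof -
  have small: "\<forall>\<^sub>F r in at_right 0. r < \<delta>"
    unfolding eventually_at_right_field using \<open>0 < \<delta>\<close> by blast
  have windows_eq: "{s. t < s \<and> s < t + r \<and> e < \<bar>f s - a\<bar>} = {s. t < s \<and> s < t + r \<and> e < \<bar>h s - a\<bar>}"
    "{s. t - r < s \<and> s < t \<and> e < \<bar>f s - a\<bar>} = {s. t - r < s \<and> s < t \<and> e < \<bar>h s - a\<bar>}"
    if "r < \<delta>" for r e a
  proof -
    have "f s = h s" if "t - \<delta> < s" "s < t + \<delta>" for s
      using eq[of s] that by (simp add: abs_less_iff)
    with \<open>r < \<delta>\<close> show "{s. t < s \<and> s < t + r \<and> e < \<bar>f s - a\<bar>} = {s. t < s \<and> s < t + r \<and> e < \<bar>h s - a\<bar>}"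
      "{s. t - r < s \<and> s < t \<and> e < \<bar>f s - a\<bar>} = {s. t - r < s \<and> s < t \<and> e < \<bar>h s - a\<bar>}"
      by (auto intro!: Collect_cong)
  qed
  have "aplim_right f t a \<longleftrightarrow> aplim_right h t a" "aplim_left f t a \<longleftrightarrow> aplim_left h t a" for a
    unfolding aplim_right_def aplim_left_def
    by (intro all_cong1 imp_cong[OF refl] tendsto_cong eventually_mono[OF small], simp only: windows_eq)+
  then show ?thesis by (simp add: jumpset_def)
qed

section \<open>Jump sets depending on a parameter\<close>

lemma monotone_quotient_tendsto_zero_iff:
  fixes m :: "real \<Rightarrow> real"
  assumes mono: "\<And>r r'. 0 < r \<Longrightarrow> r \<le> r' \<Longrightarrow> m r \<le> m r'" and nonneg: "\<And>r. 0 < r \<Longrightarrow> 0 \<le> m r"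
  shows "((\<lambda>r. m r / r) \<longlongrightarrow> 0) (at_right 0) \<longleftrightarrow> (\<lambda>k. m (inverse (real k)) * real k) \<longlonglongrightarrow> 0"
proof
  assume "((\<lambda>r. m r / r) \<longlongrightarrow> 0) (at_right 0)"
  moreover have "filterlim (\<lambda>k. inverse (real k)) (at_right 0) sequentially"
    by (intro tendsto_imp_filterlim_at_right lim_inverse_n) (auto intro: eventually_sequentiallyI[of 1])
  ultimately show "(\<lambda>k. m (inverse (real k)) * real k) \<longlonglongrightarrow> 0"
    by (auto dest: filterlim_compose simp: divide_inverse)
next
  assume lim: "(\<lambda>k. m (inverse (real k)) * real k) \<longlonglongrightarrow> 0"
  define k where "k r = nat \<lfloor>inverse r\<rfloor>" for r :: real
  have "filterlim k sequentially (at_right 0)"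
    unfolding k_def by (rule filterlim_compose[OF filterlim_nat_sequentially
          filterlim_compose[OF filterlim_floor_sequentially filterlim_inverse_at_top_right]])
  then have "((\<lambda>r. m (inverse (real (k r))) * real (k r)) \<longlongrightarrow> 0) (at_right 0)"
    by (rule filterlim_compose[OF lim])
  then have upper_lim: "((\<lambda>r. 2 * (m (inverse (real (k r))) * real (k r))) \<longlongrightarrow> 0) (at_right 0)"
    by (rule tendsto_mult_right_zero)
  have "m r / r \<le> 2 * (m (inverse (real (k r))) * real (k r))" if r: "0 < r" "r < 1" for r
  proof -
    have "real (k r) = of_int \<lfloor>inverse r\<rfloor>" using r by (simp add: k_def)
    then have k_le: "real (k r) \<le> inverse r" and k_gt: "inverse r < real (k r) + 1"
      by linarith+
    have "1 < inverse r" using r by (simp add: one_less_inverse)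
    then have k_pos: "0 < k r" using k_gt by simp
    then have "r \<le> inverse (real (k r))" "inverse r \<le> 2 * real (k r)"
      using le_imp_inverse_le[OF k_le] k_gt r by auto
    then have "m r * inverse r \<le> m (inverse (real (k r))) * (2 * real (k r))"
      using r k_pos by (intro mult_mono mono nonneg) auto
    then show ?thesis by (simp add: divide_inverse)
  qed
  then have upper: "\<forall>\<^sub>F r in at_right 0. m r / r \<le> 2 * (m (inverse (real (k r))) * real (k r))"
    unfolding eventually_at_right_field by (intro exI[of _ 1]) auto
  have lower: "\<forall>\<^sub>F r in at_right 0. 0 \<le> m r / r"
    unfolding eventually_at_right_field by (intro exI[of _ 1]) (auto simp: nonneg)
  show "((\<lambda>r. m r / r) \<longlongrightarrow> 0) (at_right 0)"
    by (rule real_tendsto_sandwich[OF lower upper tendsto_const upper_lim])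
qed

lemma measurable_LIMSEQ_zero:
  fixes g :: "nat \<Rightarrow> 'a \<Rightarrow> real"
  assumes [measurable]: "\<And>k. g k \<in> borel_measurable M"
  shows "Measurable.pred M (\<lambda>x. (\<lambda>k. g k x) \<longlonglongrightarrow> 0)"
proof -
  have "(\<lambda>k. g k x) \<longlonglongrightarrow> 0 \<longleftrightarrow> Cauchy (\<lambda>k. g k x) \<and> lim (\<lambda>k. g k x) = 0" for x
    by (metis Cauchy_convergent_iff convergent_def limI)
  then show ?thesis by simp
qed

lemma measurable_null_density:
  fixes I :: "real \<Rightarrow> real \<Rightarrow> real set" and \<tau> :: "'a \<Rightarrow> real" and P :: "'a \<Rightarrow> real \<Rightarrow> bool"
  assumes windows: "\<And>t. window_family (I t)"
    and window_pred[measurable]: "\<And>r. Measurable.pred (M \<Otimes>\<^sub>M lborel) (\<lambda>p. snd p \<in> I (\<tau> (fst p)) r)"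
    and P_pred[measurable]: "Measurable.pred (M \<Otimes>\<^sub>M lborel) (\<lambda>p. P (fst p) (snd p))"
  shows "Measurable.pred M (\<lambda>x. null_density (I (\<tau> x)) {s. P x s})"
proof -
  define m where "m x r = measure lborel (I (\<tau> x) r \<inter> {s. P x s})" for x r
  have m_borel[measurable]: "(\<lambda>x. m x r) \<in> borel_measurable M" for r
  proof -
    let ?Q = "{p \<in> space (M \<Otimes>\<^sub>M lborel). snd p \<in> I (\<tau> (fst p)) r \<and> P (fst p) (snd p)}"
    have [measurable]: "(\<lambda>x. emeasure lborel (Pair x -` ?Q)) \<in> borel_measurable M"
      by (rule lborel.measurable_emeasure_Pair) measurable
    have "(\<lambda>x. enn2real (emeasure lborel (Pair x -` ?Q))) \<in> borel_measurable M"
      by measurable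
    moreover have "x \<in> space M \<Longrightarrow> m x r = enn2real (emeasure lborel (Pair x -` ?Q))" for x
      by (auto simp: m_def measure_def space_pair_measure intro!: arg_cong[where f="\<lambda>A. enn2real (emeasure lborel A)"])
    ultimately show ?thesis
      by (rule measurable_cong[THEN iffD2, rotated])
  qed
  have density_iff: "null_density (I (\<tau> x)) {s. P x s} \<longleftrightarrow> (\<lambda>k. m x (inverse (real k)) * real k) \<longlonglongrightarrow> 0"
    if x: "x \<in> space M" for x
  proof -
    have "{s. P x s} \<in> sets borel"
      using measurable_Pair2[OF P_pred x] by (simp add: pred_def)
    then show ?thesis
      unfolding null_density_def m_def
      by (intro monotone_quotient_tendsto_zero_iff measure_window_Int_mono[OF windows] measure_nonneg) auto
  qed
  then have "{x \<in> space M. null_density (I (\<tau> x)) {s. P x s}} =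
      {x \<in> space M. (\<lambda>k. m x (inverse (real k)) * real k) \<longlonglongrightarrow> 0}"
    by blast
  moreover have "Measurable.pred M (\<lambda>x. (\<lambda>k. m x (inverse (real k)) * real k) \<longlonglongrightarrow> 0)"
    by (rule measurable_LIMSEQ_zero) measurable
  ultimately show ?thesis
    by (simp add: pred_def)
qed

lemma measurable_jumpset:
  fixes f :: "'a \<Rightarrow> real \<Rightarrow> real" and \<tau> :: "'a \<Rightarrow> real"
  assumes f[measurable]: "(\<lambda>p. f (fst p) (snd p)) \<in> borel_measurable (M \<Otimes>\<^sub>M lborel)"
    and \<tau>[measurable]: "\<tau> \<in> borel_measurable M"
  shows "Measurable.pred M (\<lambda>x. \<tau> x \<in> jumpset (f x))"
proof -
  have f_x: "f x \<in> borel_measurable borel" if "x \<in> space M" for x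
    using measurable_Pair2[OF f that] by simp
  have [measurable]: "Measurable.pred M (\<lambda>x. null_density (\<lambda>r. {\<tau> x<..<\<tau> x + r}) {s. P x s})"
    if "Measurable.pred (M \<Otimes>\<^sub>M lborel) (\<lambda>p. P (fst p) (snd p))" for P
    by (rule measurable_null_density[OF window_family_right _ that]) (simp only: greaterThanLessThan_iff, measurable)
  have [measurable]: "Measurable.pred M (\<lambda>x. null_density (\<lambda>r. {\<tau> x - r<..<\<tau> x}) {s. P x s})"
    if "Measurable.pred (M \<Otimes>\<^sub>M lborel) (\<lambda>p. P (fst p) (snd p))" for P
    by (rule measurable_null_density[OF window_family_left _ that]) (simp only: greaterThanLessThan_iff, measurable)
  show ?thesis
    unfolding pred_def by (simp only: jumpset_iff[OF f_x] cong: conj_cong) measurable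
qed

section \<open>Borel measurability and difference quotients\<close>

lemma borel_measurable_fst_comp[measurable (raw)]:
  fixes f :: "'a \<Rightarrow> 'b::topological_space \<times> 'c::topological_space"
  shows "f \<in> borel_measurable M \<Longrightarrow> (\<lambda>x. fst (f x)) \<in> borel_measurable M"
  by (rule borel_measurable_continuous_on[OF continuous_on_fst[OF continuous_on_id]])

lemma borel_measurable_snd_comp[measurable (raw)]:
  fixes f :: "'a \<Rightarrow> 'b::topological_space \<times> 'c::topological_space"
  shows "f \<in> borel_measurable M \<Longrightarrow> (\<lambda>x. snd (f x)) \<in> borel_measurable M"
  by (rule borel_measurable_continuous_on[OF continuous_on_snd[OF continuous_on_id]])

lemma has_vector_derivative_imp_LIMSEQ_difference_quotient:
  assumes "(\<gamma> has_vector_derivative V) (at 0)"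
  shows "(\<lambda>k. real k *\<^sub>R (\<gamma> (inverse (real k)) - \<gamma> 0)) \<longlonglongrightarrow> V"
proof -
  have "((\<lambda>t. norm (\<gamma> t - \<gamma> 0 - t *\<^sub>R V) / norm t) \<longlongrightarrow> 0) (at 0)"
    using assms unfolding has_vector_derivative_def has_derivative_iff_norm by simp
  moreover have "filterlim (\<lambda>k. inverse (real k)) (at 0) sequentially"
    by (intro filterlim_at_withinI lim_inverse_n) (auto intro: eventually_sequentiallyI[of 1])
  ultimately have lim: "(\<lambda>k. norm (\<gamma> (inverse (real k)) - \<gamma> 0 - inverse (real k) *\<^sub>R V) / norm (inverse (real k))) \<longlonglongrightarrow> 0"
    by (rule filterlim_compose)
  have eq: "norm (\<gamma> (inverse (real k)) - \<gamma> 0 - inverse (real k) *\<^sub>R V) / norm (inverse (real k))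
      = norm (real k *\<^sub>R (\<gamma> (inverse (real k)) - \<gamma> 0) - V)" if "0 < k" for k
  proof -
    have "real k *\<^sub>R (\<gamma> (inverse (real k)) - \<gamma> 0) - V = real k *\<^sub>R (\<gamma> (inverse (real k)) - \<gamma> 0 - inverse (real k) *\<^sub>R V)"
      using that by (simp add: scaleR_diff_right)
    then show ?thesis using that by (simp add: divide_inverse_commute)
  qed
  have "(\<lambda>k. norm (real k *\<^sub>R (\<gamma> (inverse (real k)) - \<gamma> 0) - V)) \<longlonglongrightarrow> 0"
    using lim by (rule Lim_transform_eventually) (use eq in \<open>auto intro: eventually_sequentiallyI[of 1]\<close>)
  then show ?thesis
    by (simp add: LIM_zero_cancel tendsto_norm_zero_iff)
qed

lemma borel_measurable_inverse_on_sigma_compact: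
  fixes K :: "nat \<Rightarrow> 'a::topological_space set" and f :: "'a \<Rightarrow> 'b::t2_space" and h :: "'b \<Rightarrow> 'a"
  assumes K: "\<And>n. compact (K n)" and f: "continuous_on (\<Union>n. K n) f" and B: "B \<in> sets borel"
    and h_in: "\<And>y. y \<in> B \<Longrightarrow> h y \<in> (\<Union>n. K n)" and f_h: "\<And>y. y \<in> B \<Longrightarrow> f (h y) = y"
    and h_f: "\<And>x. x \<in> (\<Union>n. K n) \<Longrightarrow> f x \<in> B \<Longrightarrow> h (f x) = x"
  shows "(\<lambda>y. if y \<in> B then h y else c) \<in> borel_measurable borel"
proof (rule borel_measurableI)
  have closed_pre: "{y \<in> B. h y \<in> C} \<in> sets borel" if "closed C" for C
  proof -
    have "{y \<in> B. h y \<in> C} = B \<inter> (\<Union>n. f ` (K n \<inter> C))"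
    proof (intro equalityI subsetI)
      fix y assume "y \<in> {y \<in> B. h y \<in> C}"
      then show "y \<in> B \<inter> (\<Union>n. f ` (K n \<inter> C))"
        using h_in f_h by (force intro: image_eqI[of y f "h y"])
    next
      fix y assume "y \<in> B \<inter> (\<Union>n. f ` (K n \<inter> C))"
      then obtain n x where "x \<in> K n" "x \<in> C" "y = f x" "y \<in> B" by auto
      moreover have "h (f x) = x" using h_f \<open>x \<in> K n\<close> \<open>y = f x\<close> \<open>y \<in> B\<close> by blast
      ultimately show "y \<in> {y \<in> B. h y \<in> C}" by simp
    qed
    moreover have "f ` (K n \<inter> C) \<in> sets borel" for n
      using K that
      by (intro borel_closed compact_imp_closed compact_continuous_image compact_Int_closed
          continuous_on_subset[OF f]) auto
    then have "(\<Union>n. f ` (K n \<inter> C)) \<in> sets borel"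
      by (intro sets.countable_UN) auto
    ultimately show ?thesis
      using B by simp
  qed
  fix T :: "'a set" assume "open T"
  then have "(\<lambda>y. if y \<in> B then h y else c) -` T \<inter> space borel
      = (B - {y \<in> B. h y \<in> - T}) \<union> (if c \<in> T then - B else {})"
    by (auto split: if_splits)
  moreover have "{y \<in> B. h y \<in> - T} \<in> sets borel"
    using closed_pre[of "- T"] \<open>open T\<close> by (simp add: closed_Compl del: Compl_iff)
  ultimately show "(\<lambda>y. if y \<in> B then h y else c) -` T \<inter> space borel \<in> sets borel"
    using B by (simp add: sets.Diff borel_comp)
qed

section \<open>Curvilinear charts\<close>

lemma smooth_mfd_differentiable_extension:
  assumes "smooth_mfd S f" "p \<in> S"
  obtains U h where "open U" "p \<in> U" "h differentiable_on U" "\<And>q. q \<in> U \<inter> S \<Longrightarrow> h q = f q"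
proof -
  obtain U h where U: "open U" "p \<in> U" "Cinf_on U h" "\<forall>q\<in>U \<inter> S. h q = f q"
    using assms unfolding smooth_mfd_def by blast
  then have "dderivs h U [] differentiable_on U"
    unfolding Cinf_on_def Ck_on_def by (metis length_0_conv less_one)
  with U show thesis using that by simp
qed

lemma smooth_mfd_imp_continuous_on:
  assumes "smooth_mfd S f"
  shows "continuous_on S f"
proof (rule continuous_on_eq_continuous_within[THEN iffD2], intro ballI)
  fix p assume "p \<in> S"
  then obtain U h where U: "open U" "p \<in> U" "h differentiable_on U" "\<And>q. q \<in> U \<inter> S \<Longrightarrow> h q = f q"
    using smooth_mfd_differentiable_extension[OF assms] by blast
  then have "continuous (at p within S) h"
    using differentiable_on_eq_differentiable_at differentiable_imp_continuous_within
      continuous_at_imp_continuous_within by blast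
  moreover obtain e where "0 < e" "ball p e \<subseteq> U"
    using U open_contains_ball by blast
  ultimately show "continuous (at p within S) f"
    using \<open>p \<in> S\<close> U(4) by (elim continuous_transform_within) (auto simp: dist_commute subset_iff)
qed

locale curvilinear_chart =
  fixes \<Omega> :: "(real^'n::finite) set" and P :: "real^'n \<Rightarrow> real^'n \<Rightarrow> real^'n" and \<rho> \<tau> :: real
    and A :: "((real^'n) \<times> (real^'n)) set" and phi :: "(real^'n) \<times> (real^'n) \<Rightarrow> real^'n"
  assumes open_\<Omega>: "open \<Omega>"
    and openin_A: "openin (top_of_set (UNIV \<times> sphere 0 1)) A"
    and A_slice: "\<And>\<xi>. \<xi> \<in> sphere 0 1 \<Longrightarrow> {z. (z, \<xi>) \<in> A} = Acyl \<rho> \<tau> \<xi>"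
    and smooth_phi: "smooth_mfd A phi"
    and \<Omega>_subset_phi_image: "\<And>\<xi>. \<xi> \<in> sphere 0 1 \<Longrightarrow> \<Omega> \<subseteq> (\<lambda>z. phi (z, \<xi>)) ` Acyl \<rho> \<tau> \<xi>"
    and inj_phi: "\<And>\<xi>. \<xi> \<in> sphere 0 1 \<Longrightarrow> inj_on (\<lambda>z. phi (z, \<xi>)) {z \<in> Acyl \<rho> \<tau> \<xi>. phi (z, \<xi>) \<in> \<Omega>}"
    and P_phi: "\<And>\<xi> y t. \<xi> \<in> sphere 0 1 \<Longrightarrow> y \<in> perp \<xi> \<Longrightarrow> norm y < \<rho> \<Longrightarrow> \<bar>t\<bar> < \<tau> \<Longrightarrow>
        phi (y + t *\<^sub>R \<xi>, \<xi>) \<in> \<Omega> \<Longrightarrow> P \<xi> (phi (y + t *\<^sub>R \<xi>, \<xi>)) = y"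
begin

lemma A_eq_Int_open:
  obtains W where "open W" "A = (UNIV \<times> sphere 0 1) \<inter> W"
  using openin_A by (auto simp: openin_open)

lemma \<Omega>_borel[measurable]: "\<Omega> \<in> sets borel"
  using open_\<Omega> by simp

lemma A_borel[measurable]: "A \<in> sets borel"
proof -
  obtain W where W: "open W" "A = (UNIV \<times> sphere 0 1) \<inter> W" by (rule A_eq_Int_open)
  have "closed (UNIV \<times> sphere (0::real^'n) 1)" by (intro closed_Times) auto
  then show ?thesis unfolding W(2) by (rule sets.Int[OF borel_closed borel_open[OF W(1)]])
qed

lemma \<Omega>_sphere_borel[measurable]: "\<Omega> \<times> sphere (0::real^'n) 1 \<in> sets borel"
proof -
  have "open (\<Omega> \<times> (UNIV :: (real^'n) set))" using open_\<Omega> by (intro open_Times) auto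
  moreover have "closed (UNIV \<times> sphere (0::real^'n) 1)" by (intro closed_Times) auto
  ultimately have "(\<Omega> \<times> UNIV) \<inter> (UNIV \<times> sphere (0::real^'n) 1) \<in> sets borel"
    by (intro sets.Int borel_open borel_closed)
  moreover have "(\<Omega> \<times> UNIV) \<inter> (UNIV \<times> sphere (0::real^'n) 1) = \<Omega> \<times> sphere 0 1" by auto
  ultimately show ?thesis by simp
qed

lemma continuous_on_phi: "continuous_on A phi"
  using smooth_phi by (rule smooth_mfd_imp_continuous_on)

lemma borel_measurable_phi_ext: "(\<lambda>q. if q \<in> A then phi q else 0) \<in> borel_measurable borel"
  by (intro borel_measurable_continuous_on_if A_borel continuous_on_phi continuous_on_const)

lemma open_line_preimage:
  assumes \<xi>: "\<xi> \<in> sphere 0 1" and "open V"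
  shows "open {t::real. (w + t *\<^sub>R \<xi>, \<xi>) \<in> A \<and> phi (w + t *\<^sub>R \<xi>, \<xi>) \<in> V}"
proof -
  obtain W where W: "open W" "A = (UNIV \<times> sphere 0 1) \<inter> W" by (rule A_eq_Int_open)
  define G where "G = (\<lambda>t::real. (w + t *\<^sub>R \<xi>, \<xi>)) -` W"
  have G_eq: "G = {t. (w + t *\<^sub>R \<xi>, \<xi>) \<in> A}" using W \<xi> by (auto simp: G_def)
  have "open G" unfolding G_def by (intro continuous_open_vimage[OF W(1)] continuous_intros)
  moreover have "continuous_on G (\<lambda>t. phi (w + t *\<^sub>R \<xi>, \<xi>))"
    by (rule continuous_on_compose2[OF continuous_on_phi]) (auto intro!: continuous_intros simp: G_eq)
  ultimately have "open ((\<lambda>t. phi (w + t *\<^sub>R \<xi>, \<xi>)) -` V \<inter> G)"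
    using \<open>open V\<close> continuous_on_open_vimage by blast
  then show ?thesis by (simp add: G_eq Collect_conj_eq vimage_def Int_commute)
qed

lemma phiinv_in_Acyl: "\<xi> \<in> sphere 0 1 \<Longrightarrow> x \<in> \<Omega> \<Longrightarrow> phiinv \<rho> \<tau> phi \<xi> x \<in> Acyl \<rho> \<tau> \<xi>"
  unfolding phiinv_def using \<Omega>_subset_phi_image by (intro inv_into_into) blast

lemma phi_phiinv: "\<xi> \<in> sphere 0 1 \<Longrightarrow> x \<in> \<Omega> \<Longrightarrow> phi (phiinv \<rho> \<tau> phi \<xi> x, \<xi>) = x"
  unfolding phiinv_def using \<Omega>_subset_phi_image by (intro f_inv_into_f[of _ "\<lambda>z. phi (z, \<xi>)"]) blast

lemma phiinv_phi:
  assumes "\<xi> \<in> sphere 0 1" "z \<in> Acyl \<rho> \<tau> \<xi>" "phi (z, \<xi>) \<in> \<Omega>"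
  shows "phiinv \<rho> \<tau> phi \<xi> (phi (z, \<xi>)) = z"
proof (rule inj_onD[OF inj_phi[OF assms(1)]])
  show "phi (phiinv \<rho> \<tau> phi \<xi> (phi (z, \<xi>)), \<xi>) = phi (z, \<xi>)"
    using phi_phiinv assms by simp
  show "phiinv \<rho> \<tau> phi \<xi> (phi (z, \<xi>)) \<in> {z \<in> Acyl \<rho> \<tau> \<xi>. phi (z, \<xi>) \<in> \<Omega>}"
    using phiinv_in_Acyl phi_phiinv assms by simp
qed (use assms in simp)

lemma P_add_tx:
  assumes \<xi>: "\<xi> \<in> sphere 0 1" and x: "x \<in> \<Omega>"
  shows "P \<xi> x + tx \<rho> \<tau> phi \<xi> x *\<^sub>R \<xi> = phiinv \<rho> \<tau> phi \<xi> x"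
proof -
  obtain y t where yt: "phiinv \<rho> \<tau> phi \<xi> x = y + t *\<^sub>R \<xi>" "y \<in> perp \<xi>" "norm y < \<rho>" "\<bar>t\<bar> < \<tau>"
    using phiinv_in_Acyl[OF \<xi> x] unfolding Acyl_def by blast
  then have "P \<xi> x = y"
    using P_phi[OF \<xi> yt(2-4)] phi_phiinv[OF \<xi> x] x by simp
  moreover have "tx \<rho> \<tau> phi \<xi> x = t"
    using yt \<xi> by (simp add: tx_def perp_def inner_add_left dot_square_norm)
  ultimately show ?thesis using yt(1) by simp
qed

lemma line_has_vector_derivative_phidot:
  assumes "(w, \<xi>) \<in> A"
  shows "((\<lambda>t. phi (w + t *\<^sub>R \<xi>, \<xi>)) has_vector_derivative phidot phi \<xi> w) (at 0)"
proof -
  obtain U h where U: "open U" "(w, \<xi>) \<in> U" "h differentiable_on U" "\<And>q. q \<in> U \<inter> A \<Longrightarrow> h q = phi q"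
    using smooth_mfd_differentiable_extension[OF smooth_phi assms] by blast
  have \<xi>: "\<xi> \<in> sphere 0 1" using assms openin_imp_subset[OF openin_A] by auto
  let ?line = "\<lambda>t::real. (w + t *\<^sub>R \<xi>, \<xi>)"
  have "?line differentiable at 0"
    unfolding differentiable_def by (rule exI) (auto intro!: derivative_eq_intros)
  moreover have "h differentiable at (?line 0)"
    using U(2) U(3)[unfolded differentiable_on_eq_differentiable_at[OF U(1)]] by simp
  ultimately have "(h \<circ> ?line) differentiable at 0"
    by (rule differentiable_chain_at)
  then have "(h \<circ> ?line has_vector_derivative vector_derivative (h \<circ> ?line) (at 0)) (at 0)"
    by (simp add: vector_derivative_works)
  moreover have "open ({t. ?line t \<in> A \<and> phi (?line t) \<in> UNIV} \<inter> ?line -` U)"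
    by (intro open_Int open_line_preimage[OF \<xi>] continuous_open_vimage[OF U(1)] continuous_intros) auto
  ultimately have "((\<lambda>t. phi (?line t)) has_vector_derivative vector_derivative (h \<circ> ?line) (at 0)) (at 0)"
    by (rule has_vector_derivative_transform_within_open) (use assms U(2,4) in auto)
  then show ?thesis
    unfolding phidot_def by (simp add: vector_derivative_at)
qed

lemma borel_measurable_phidot:
  "(\<lambda>p. if p \<in> A then phidot phi (snd p) (fst p) else 0) \<in> borel_measurable borel"
proof (rule borel_measurable_LIMSEQ_metric)
  define \<Phi> where "\<Phi> q = (if q \<in> A then phi q else 0)" for q
  have [measurable]: "\<Phi> \<in> borel_measurable borel"
    unfolding \<Phi>_def[abs_def] by (rule borel_measurable_phi_ext)
  define D where "D k p = (if p \<in> A then real k *\<^sub>R (\<Phi> (fst p + inverse (real k) *\<^sub>R snd p, snd p) - \<Phi> p) else 0)"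
    for k p
  show "D k \<in> borel_measurable borel" for k
    unfolding D_def by measurable
  fix p :: "(real^'n) \<times> (real^'n)"
  show "(\<lambda>k. D k p) \<longlonglongrightarrow> (if p \<in> A then phidot phi (snd p) (fst p) else 0)"
  proof (cases "p \<in> A")
    case True
    obtain w \<xi> where p: "p = (w, \<xi>)" by fastforce
    have \<xi>: "\<xi> \<in> sphere 0 1" using True p openin_imp_subset[OF openin_A] by auto
    have "open {t. (w + t *\<^sub>R \<xi>, \<xi>) \<in> A \<and> phi (w + t *\<^sub>R \<xi>, \<xi>) \<in> UNIV}"
      by (rule open_line_preimage[OF \<xi> open_UNIV])
    moreover have "0 \<in> {t. (w + t *\<^sub>R \<xi>, \<xi>) \<in> A \<and> phi (w + t *\<^sub>R \<xi>, \<xi>) \<in> UNIV}"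
      using True p by simp
    ultimately have "\<forall>\<^sub>F k in sequentially. (w + inverse (real k) *\<^sub>R \<xi>, \<xi>) \<in> A"
      using topological_tendstoD[OF lim_inverse_n] by fastforce
    then have "\<forall>\<^sub>F k in sequentially. real k *\<^sub>R (phi (w + inverse (real k) *\<^sub>R \<xi>, \<xi>) - phi (w + 0 *\<^sub>R \<xi>, \<xi>)) = D k p"
      by eventually_elim (use True p in \<open>simp add: D_def \<Phi>_def\<close>)
    with has_vector_derivative_imp_LIMSEQ_difference_quotient[OF line_has_vector_derivative_phidot]
    have "(\<lambda>k. D k p) \<longlonglongrightarrow> phidot phi \<xi> w"
      using True p by (blast intro: Lim_transform_eventually)
    then show ?thesis
      using True p by simp
  qed (simp add: D_def)
qed

definition chart_inv :: "(real^'n) \<times> (real^'n) \<Rightarrow> real^'n" where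
  "chart_inv p = (if p \<in> \<Omega> \<times> sphere 0 1 then phiinv \<rho> \<tau> phi (snd p) (fst p) else 0)"

lemma borel_measurable_chart_inv[measurable]: "chart_inv \<in> borel_measurable borel"
proof -
  obtain W where W: "open W" "A = (UNIV \<times> sphere 0 1) \<inter> W" by (rule A_eq_Int_open)
  obtain C :: "nat \<Rightarrow> _" where C: "\<And>n. compact (C n)" "\<Union>(range C) = W"
    by (rule open_Union_compact_subsets[OF W(1)]) (rule that)
  define K where "K n = C n \<inter> (UNIV \<times> sphere 0 1)" for n
  have K: "compact (K n)" for n
    unfolding K_def using C(1) by (intro compact_Int_closed closed_Times) auto
  have K_A: "(\<Union>n. K n) = A"
    using C(2) W(2) by (auto simp: K_def)
  have "continuous_on (\<Union>n. K n) (\<lambda>q. (phi q, snd q))"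
    unfolding K_A by (intro continuous_intros continuous_on_phi)
  then have "(\<lambda>p. if p \<in> \<Omega> \<times> sphere 0 1 then (phiinv \<rho> \<tau> phi (snd p) (fst p), snd p) else 0)
      \<in> borel_measurable borel"
  proof (rule borel_measurable_inverse_on_sigma_compact[OF K])
    fix p assume "p \<in> \<Omega> \<times> sphere (0::real^'n) 1"
    then obtain x \<xi> where p: "p = (x, \<xi>)" "x \<in> \<Omega>" "\<xi> \<in> sphere 0 1" by blast
    have "(phiinv \<rho> \<tau> phi \<xi> x, \<xi>) \<in> A"
      using phiinv_in_Acyl[OF p(3,2)] A_slice[OF p(3)] by blast
    then show "(phiinv \<rho> \<tau> phi (snd p) (fst p), snd p) \<in> (\<Union>n. K n)"
      "(phi (phiinv \<rho> \<tau> phi (snd p) (fst p), snd p), snd (phiinv \<rho> \<tau> phi (snd p) (fst p), snd p)) = p"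
      unfolding K_A p using phi_phiinv[OF p(3,2)] by simp_all
  next
    fix q assume "q \<in> (\<Union>n. K n)" "(phi q, snd q) \<in> \<Omega> \<times> sphere (0::real^'n) 1"
    moreover obtain z \<xi> where q: "q = (z, \<xi>)" by fastforce
    ultimately have "\<xi> \<in> sphere 0 1" "z \<in> Acyl \<rho> \<tau> \<xi>" "phi (z, \<xi>) \<in> \<Omega>"
      using A_slice unfolding K_A by auto
    then show "(phiinv \<rho> \<tau> phi (snd (phi q, snd q)) (fst (phi q, snd q)), snd (phi q, snd q)) = q"
      using phiinv_phi q by simp
  qed measurable
  then have "(\<lambda>p. fst (if p \<in> \<Omega> \<times> sphere 0 1 then (phiinv \<rho> \<tau> phi (snd p) (fst p), snd p) else 0))
      \<in> borel_measurable borel"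
    by measurable
  then show ?thesis
    by (simp add: chart_inv_def[abs_def] if_distrib cong: if_cong)
qed

end

lemma curvilinear_projections_imp_chart:
  assumes "curvilinear_projections F \<Omega> P \<rho> \<tau> A phi" and "open \<Omega>"
  shows "curvilinear_chart \<Omega> P \<rho> \<tau> A phi"
  using assms unfolding curvilinear_projections_def by unfold_locales blast+

section \<open>Slices along the curves\<close>

locale curvilinear_slices = curvilinear_chart \<Omega> P \<rho> \<tau> A phi
  for \<Omega> :: "(real^'n::finite) set" and P \<rho> \<tau> A phi +
  fixes u :: "real^'n \<Rightarrow> real^'m::finite" and g :: "real^'n \<Rightarrow> real^'n \<Rightarrow> real^'m"
  assumes u_borel: "u \<in> borel_measurable (restrict_space borel \<Omega>)"
    and g_cont: "continuous_on (\<Omega> \<times> UNIV) (\<lambda>(x, v). g x v)"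
begin

(* For p = (x, xi), slice_line p s = (P xi x + s xi, xi), written via chart_inv so that it is
   Borel in p. Unlike slice, which evaluates phi, u and g also off their domains, slice_ext is
   cut off there; it still agrees with the slice near t_x^xi. *)
definition slice_line :: "(real^'n) \<times> (real^'n) \<Rightarrow> real \<Rightarrow> (real^'n) \<times> (real^'n)" where
  "slice_line p s = (chart_inv p + (s - chart_inv p \<bullet> snd p) *\<^sub>R snd p, snd p)"

definition slice_ext :: "(real^'n) \<times> (real^'n) \<Rightarrow> real \<Rightarrow> real" where
  "slice_ext p s = (if slice_line p s \<in> A \<and> phi (slice_line p s) \<in> \<Omega>
     then u (phi (slice_line p s)) \<bullet> g (phi (slice_line p s)) (phidot phi (snd p) (fst (slice_line p s)))
     else 0)"

lemma borel_measurable_slice_line[measurable]: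
  "(\<lambda>z. slice_line (fst z) (snd z)) \<in> borel_measurable (borel \<Otimes>\<^sub>M lborel)"
  unfolding slice_line_def by measurable

lemma borel_measurable_slice_ext:
  "(\<lambda>z. slice_ext (fst z) (snd z)) \<in> borel_measurable (borel \<Otimes>\<^sub>M lborel)"
proof -
  define \<Phi> where "\<Phi> q = (if q \<in> A then phi q else 0)" for q
  define D where "D q = (if q \<in> A then phidot phi (snd q) (fst q) else 0)" for q
  define U where "U x = (if x \<in> \<Omega> then u x else 0)" for x
  define G where "G q = (if q \<in> \<Omega> \<times> UNIV then g (fst q) (snd q) else 0)" for q
  have [measurable]: "\<Phi> \<in> borel_measurable borel"
    unfolding \<Phi>_def[abs_def] by (rule borel_measurable_phi_ext)
  have [measurable]: "D \<in> borel_measurable borel"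
    unfolding D_def[abs_def] by (rule borel_measurable_phidot)
  have [measurable]: "U \<in> borel_measurable borel"
    unfolding U_def[abs_def] using u_borel open_\<Omega> by (subst measurable_restrict_space_iff[symmetric]) auto
  have "open (\<Omega> \<times> (UNIV :: (real^'n) set))" using open_\<Omega> by (intro open_Times) auto
  then have [measurable]: "G \<in> borel_measurable borel"
    unfolding G_def using g_cont
    by (intro borel_measurable_continuous_on_if continuous_on_const) (auto simp: case_prod_beta')
  have "slice_ext p s = (if slice_line p s \<in> A \<and> \<Phi> (slice_line p s) \<in> \<Omega>
      then U (\<Phi> (slice_line p s)) \<bullet> G (\<Phi> (slice_line p s), D (slice_line p s)) else 0)" for p s
    by (simp add: slice_ext_def \<Phi>_def D_def U_def G_def slice_line_def)
  then show ?thesis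
    by (simp only:) measurable
qed

lemma jumpset_slice_iff:
  assumes x: "x \<in> \<Omega>" and \<xi>: "\<xi> \<in> sphere 0 1"
  shows "tx \<rho> \<tau> phi \<xi> x \<in> jumpset (slice u g phi \<xi> (P \<xi> x)) \<longleftrightarrow>
    chart_inv (x, \<xi>) \<bullet> \<xi> \<in> jumpset (slice_ext (x, \<xi>))"
proof -
  have tx: "tx \<rho> \<tau> phi \<xi> x = chart_inv (x, \<xi>) \<bullet> \<xi>"
    using x \<xi> by (simp add: tx_def chart_inv_def)
  have line: "slice_line (x, \<xi>) s = (P \<xi> x + s *\<^sub>R \<xi>, \<xi>)" for s
  proof -
    have "slice_line (x, \<xi>) s = (chart_inv (x, \<xi>) + (s - tx \<rho> \<tau> phi \<xi> x) *\<^sub>R \<xi>, \<xi>)"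
      by (simp add: slice_line_def tx)
    also have "\<dots> = (P \<xi> x + s *\<^sub>R \<xi>, \<xi>)"
      using P_add_tx[OF \<xi> x] x \<xi> by (simp add: chart_inv_def algebra_simps)
    finally show ?thesis .
  qed
  define N where "N = {s. (P \<xi> x + s *\<^sub>R \<xi>, \<xi>) \<in> A \<and> phi (P \<xi> x + s *\<^sub>R \<xi>, \<xi>) \<in> \<Omega>}"
  have "open N"
    unfolding N_def by (rule open_line_preimage[OF \<xi> open_\<Omega>])
  moreover have "tx \<rho> \<tau> phi \<xi> x \<in> N"
    using P_add_tx[OF \<xi> x] phiinv_in_Acyl[OF \<xi> x] A_slice[OF \<xi>] phi_phiinv[OF \<xi> x] x
    by (auto simp: N_def)
  ultimately obtain \<delta> where "0 < \<delta>" "ball (tx \<rho> \<tau> phi \<xi> x) \<delta> \<subseteq> N"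
    using open_contains_ball by blast
  moreover have "slice_ext (x, \<xi>) s = slice u g phi \<xi> (P \<xi> x) s" if "s \<in> N" for s
    using that by (simp add: N_def slice_ext_def slice_def line)
  ultimately show ?thesis
    unfolding tx[symmetric]
    by (intro jumpset_cong_local[symmetric]) (auto simp: dist_real_def abs_minus_commute subset_iff)
qed

lemma Ahat_eq: "Ahat \<Omega> u g P \<rho> \<tau> phi = {p \<in> \<Omega> \<times> sphere 0 1. chart_inv p \<bullet> snd p \<in> jumpset (slice_ext p)}"
  unfolding Ahat_def dirjump_def using jumpset_slice_iff by auto

lemma Ahat_borel: "Ahat \<Omega> u g P \<rho> \<tau> phi \<in> sets borel"
proof -
  have "Measurable.pred borel (\<lambda>p. chart_inv p \<bullet> snd p \<in> jumpset (slice_ext p))"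
    by (rule measurable_jumpset[OF borel_measurable_slice_ext]) measurable
  then have "(\<Omega> \<times> sphere 0 1) \<inter> {p \<in> space borel. chart_inv p \<bullet> snd p \<in> jumpset (slice_ext p)} \<in> sets borel"
    unfolding pred_def by (rule sets.Int[OF \<Omega>_sphere_borel])
  moreover have "(\<Omega> \<times> sphere 0 1) \<inter> {p \<in> space borel. chart_inv p \<bullet> snd p \<in> jumpset (slice_ext p)} =
      Ahat \<Omega> u g P \<rho> \<tau> phi"
    unfolding Ahat_eq by auto
  ultimately show ?thesis by simp
qed

lemma dirjump_borel:
  assumes "\<xi> \<in> sphere 0 1"
  shows "dirjump \<Omega> u g P \<rho> \<tau> phi \<xi> \<in> sets borel"
proof -
  have "(\<lambda>x. (x, \<xi>)) -` Ahat \<Omega> u g P \<rho> \<tau> phi \<inter> space borel \<in> sets borel"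
    by (rule measurable_sets[OF _ Ahat_borel]) measurable
  moreover have "(\<lambda>x. (x, \<xi>)) -` Ahat \<Omega> u g P \<rho> \<tau> phi \<inter> space borel = dirjump \<Omega> u g P \<rho> \<tau> phi \<xi>"
    using assms by (auto simp: Ahat_def dirjump_def)
  ultimately show ?thesis by simp
qed

end

theorem lemma4p4:
  fixes \<Omega> :: "(real^'n) set"
    and u :: "real^'n \<Rightarrow> real^'m"
    and F :: "real^'n \<Rightarrow> real^'n \<Rightarrow> real^'n"
    and g :: "real^'n \<Rightarrow> real^'n \<Rightarrow> real^'m"
    and P :: "real^'n \<Rightarrow> real^'n \<Rightarrow> real^'n"
    and \<rho> \<tau> :: real
    and A :: "((real^'n) \<times> (real^'n)) set"
    and phi :: "(real^'n) \<times> (real^'n) \<Rightarrow> real^'n"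
  assumes F_smooth: "Cinf_on UNIV (\<lambda>(x, v). F x v)"
    and F_hom: "\<forall>x v \<alpha>. F x (\<alpha> *\<^sub>R v) = \<alpha>\<^sup>2 *\<^sub>R F x v"
    and g_cont: "continuous_on (\<Omega> \<times> UNIV) (\<lambda>(x, v). g x v)"
    and \<Omega>_open: "open \<Omega>"
    and u_borel: "u \<in> borel_measurable (restrict_space borel \<Omega>)"
    and curv: "curvilinear_projections F \<Omega> P \<rho> \<tau> A phi"
  shows "(\<forall>\<xi>\<in>sphere 0 1. dirjump \<Omega> u g P \<rho> \<tau> phi \<xi> \<in> sets borel)
         \<and> Ahat \<Omega> u g P \<rho> \<tau> phi \<in> sets borel"
proof -
  interpret curvilinear_slices \<Omega> P \<rho> \<tau> A phi u g
    using curvilinear_projections_imp_chart[OF curv \<Omega>_open] u_borel g_cont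
    by (intro curvilinear_slices.intro curvilinear_slices_axioms.intro)
  show ?thesis
    using dirjump_borel Ahat_borel by blast
qed

end
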